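(* Suppose that $A$ and $B$ are Gram mates and $\mathrm{rank}(A-B)=1$. If the remaining matrix of $A$ and $B$ is fixable, then $A$ is isomorphic to $B$.
   Context: Two $(0,1)$ matrices $A\neq B$ are Gram mates if $AA^T=BB^T$ and $A^TA=B^TB$; they are isomorphic if $B=PAQ$ for permutation matrices $P,Q$. If $A,B$ are Gram mates with $\mathrm{rank}(A-B)=1$, then after permuting rows and columns one may write $A=\begin{bmatrix} 0 & J_{k_1,k_2} & X_1\\ J_{k_1,k_2} & 0 & X_2\\ X_3 & X_4 & Y\end{bmatrix}$, $B=\begin{bmatrix} J_{k_1,k_2} & 0 & X_1\\ 0 & J_{k_1,k_2} & X_2\\ X_3 & X_4 & Y\end{bmatrix}$ with $k_1,k_2>0$, $\mathbf{1}^TX_1=\mathbf{1}^TX_2$, $X_3\mathbf{1}=X_4\mathbf{1}$, where $J_{p,q}$ is the $p\times q$ all-ones matrix; $Y$ (the submatrix on rows and columns where $A-B$ is zero) is the remaining matrix of $A$ and $B$. For $(0,1)$ matrices $Z_1,Z_2$ of equal size, $\mathcal R_{Z_1,Z_2}$ is the set of triples $(P_1,P_2,Q)$ of permutation matrices with $Z_2=P_1Z_1Q$ and $Z_1=P_2Z_2Q$, and $\mathcal L_{Z_1,Z_2}$ is the set of triples $(P,Q_1,Q_2)$ of permutation matrices with $Z_1=PZ_1Q_1$ and $Z_2=PZ_2Q_2$. $Y$ is fixable if there exist permutation matrices $P,Q$ with $Y=PYQ$ such that either (i) $(P_1,P_2,Q)\in\mathcal R_{X_1,X_2}$ and $(P,Q_3,Q_4)\in\mathcal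 L_{X_3,X_4}$ for some $P_1,P_2,Q_3,Q_4$, or (ii) $(Q_3,Q_4,P^T)\in\mathcal R_{X_3^T,X_4^T}$ and $(Q^T,P_1,P_2)\in\mathcal L_{X_1^T,X_2^T}$ for some $P_1,P_2,Q_3,Q_4$. *)

theory Defs
  imports "Jordan_Normal_Form.DL_Rank" "HOL-Combinatorics.Permutations"
begin

definition zero_one_mat :: "real mat \<Rightarrow> bool" where
  "zero_one_mat A \<longleftrightarrow> (\<forall>i < dim_row A. \<forall>j < dim_col A. A $$ (i,j) = 0 \<or> A $$ (i,j) = 1)"

definition perm_mat :: "nat \<Rightarrow> (nat \<Rightarrow> nat) \<Rightarrow> real mat" where
  "perm_mat n p = mat n n (\<lambda>(i,j). if p i = j then 1 else 0)"

definition is_perm_mat :: "nat \<Rightarrow> real mat \<Rightarrow> bool" where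
  "is_perm_mat n P \<longleftrightarrow> (\<exists>p. p permutes {..<n} \<and> P = perm_mat n p)"

definition gram_mates :: "real mat \<Rightarrow> real mat \<Rightarrow> bool" where
  "gram_mates A B \<longleftrightarrow> zero_one_mat A \<and> zero_one_mat B \<and>
     dim_row A = dim_row B \<and> dim_col A = dim_col B \<and> A \<noteq> B \<and>
     A * A\<^sup>T = B * B\<^sup>T \<and> A\<^sup>T * A = B\<^sup>T * B"

definition mat_isomorphic :: "real mat \<Rightarrow> real mat \<Rightarrow> bool" where
  "mat_isomorphic A B \<longleftrightarrow> (\<exists>P Q. is_perm_mat (dim_row A) P \<and> is_perm_mat (dim_col A) Q \<and>
     B = P * A * Q)"

definition mat_rank :: "real mat \<Rightarrow> nat" where
  "mat_rank M = vec_space.rank (dim_row M) M"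

definition R_set :: "real mat \<Rightarrow> real mat \<Rightarrow> (real mat \<times> real mat \<times> real mat) set" where
  "R_set Z1 Z2 = {(P1,P2,Q). is_perm_mat (dim_row Z1) P1 \<and> is_perm_mat (dim_row Z1) P2 \<and>
     is_perm_mat (dim_col Z1) Q \<and> Z2 = P1 * Z1 * Q \<and> Z1 = P2 * Z2 * Q}"

definition L_set :: "real mat \<Rightarrow> real mat \<Rightarrow> (real mat \<times> real mat \<times> real mat) set" where
  "L_set Z1 Z2 = {(P,Q1,Q2). is_perm_mat (dim_row Z1) P \<and> is_perm_mat (dim_col Z1) Q1 \<and>
     is_perm_mat (dim_col Z1) Q2 \<and> Z1 = P * Z1 * Q1 \<and> Z2 = P * Z2 * Q2}"

definition fixable :: "real mat \<Rightarrow> real mat \<Rightarrow> real mat \<Rightarrow> real mat \<Rightarrow> real mat \<Rightarrow> bool" where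
  "fixable X1 X2 X3 X4 Y \<longleftrightarrow>
     (\<exists>P Q. is_perm_mat (dim_row Y) P \<and> is_perm_mat (dim_col Y) Q \<and> Y = P * Y * Q \<and>
       ((\<exists>P1 P2 Q3 Q4. (P1,P2,Q) \<in> R_set X1 X2 \<and> (P,Q3,Q4) \<in> L_set X3 X4) \<or>
        (\<exists>P1 P2 Q3 Q4. (Q3,Q4,P\<^sup>T) \<in> R_set X3\<^sup>T X4\<^sup>T \<and> (Q\<^sup>T,P1,P2) \<in> L_set X1\<^sup>T X2\<^sup>T)))"

text \<open>The block matrices
  A = [[0, J, X1],[J, 0, X2],[X3, X4, Y]] and B = [[J, 0, X1],[0, J, X2],[X3, X4, Y]],
  with J = J_{k1,k2}; rows: k1, k1, dim_row Y; columns: k2, k2, dim_col Y.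
  The flag a selects A (True) or B (False).\<close>
definition block_mat3 :: "bool \<Rightarrow> nat \<Rightarrow> nat \<Rightarrow> real mat \<Rightarrow> real mat \<Rightarrow> real mat \<Rightarrow> real mat \<Rightarrow> real mat \<Rightarrow> real mat" where
  "block_mat3 a k1 k2 X1 X2 X3 X4 Y = mat (2*k1 + dim_row Y) (2*k2 + dim_col Y) (\<lambda>(i,j).
     if i < k1 then (if j < k2 then (if a then 0 else 1) else if j < 2*k2 then (if a then 1 else 0)
                     else X1 $$ (i, j - 2*k2))
     else if i < 2*k1 then (if j < k2 then (if a then 1 else 0) else if j < 2*k2 then (if a then 0 else 1)
                     else X2 $$ (i - k1, j - 2*k2))
     else (if j < k2 then X3 $$ (i - 2*k1, j) else if j < 2*k2 then X4 $$ (i - 2*k1, j - k2)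
           else Y $$ (i - 2*k1, j - 2*k2)))"

end

(*
  Swapping the two upper row blocks of A yields B with X1 and X2 interchanged. In case (i) of
  fixability the permutations diag(P2, P1, P) of the rows and diag(Q3, Q4, Q) of the columns map
  X2, X1, X3, X4, Y back to X1, X2, X3, X4, Y and leave the all-ones and zero blocks alone, so B
  arises from A by permuting rows and columns. Case (ii) is case (i) for the transposes.
  Permutation matrices are handled through the index maps they induce: the (i,j) entry of
  perm_mat n p * A * perm_mat m q is the (p i, inv q j) entry of A.
*)
theory Submission
  imports Defs
begin

(* Otherwise inv would parse as the group inverse of HOL-Algebra. *)
unbundle no m_inv_syntax

lemma permutes_lessThan: "p permutes {..<n} \<Longrightarrow> i < n \<Longrightarrow> p i < n"
  using permutes_in_image by fastforce

definition mat_permute :: "'a mat \<Rightarrow> (nat \<Rightarrow> nat) \<Rightarrow> (nat \<Rightarrow> nat) \<Rightarrow> 'a mat" where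
  "mat_permute A p q = mat (dim_row A) (dim_col A) (\<lambda>(i,j). A $$ (p i, q j))"

lemma dim_mat_permute [simp]:
  "dim_row (mat_permute A p q) = dim_row A" "dim_col (mat_permute A p q) = dim_col A"
  by (simp_all add: mat_permute_def)

lemma index_mat_permute [simp]:
  "i < dim_row A \<Longrightarrow> j < dim_col A \<Longrightarrow> mat_permute A p q $$ (i,j) = A $$ (p i, q j)"
  by (simp add: mat_permute_def)

lemma perm_mat_mult_index:
  assumes "p permutes {..<n}" "A \<in> carrier_mat n m" "i < n" "j < m"
  shows "(perm_mat n p * A) $$ (i,j) = A $$ (p i, j)"
proof -
  have "(perm_mat n p * A) $$ (i,j) = (\<Sum>l<n. (if p i = l then 1 else 0) * A $$ (l,j))"
    using assms by (simp add: perm_mat_def scalar_prod_def atLeast0LessThan)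
  also have "\<dots> = (\<Sum>l<n. if l = p i then A $$ (l,j) else 0)"
    by (rule sum.cong) auto
  also have "\<dots> = A $$ (p i, j)"
    using permutes_lessThan[OF assms(1,3)] by simp
  finally show ?thesis .
qed

lemma mult_perm_mat_index:
  assumes "q permutes {..<m}" "A \<in> carrier_mat n m" "i < n" "j < m"
  shows "(A * perm_mat m q) $$ (i,j) = A $$ (i, inv q j)"
proof -
  have "(A * perm_mat m q) $$ (i,j) = (\<Sum>l<m. A $$ (i,l) * (if q l = j then 1 else 0))"
    using assms by (simp add: perm_mat_def scalar_prod_def atLeast0LessThan)
  also have "\<dots> = (\<Sum>l<m. if l = inv q j then A $$ (i,l) else 0)"
    by (intro sum.cong) (auto simp: permutes_inverses[OF assms(1)])
  also have "\<dots> = A $$ (i, inv q j)"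
    using permutes_lessThan[OF permutes_inv[OF assms(1)] assms(4)] by simp
  finally show ?thesis .
qed

lemma perm_mat_mult_perm_mat:
  assumes "p permutes {..<n}" "q permutes {..<m}" "A \<in> carrier_mat n m"
  shows "perm_mat n p * A * perm_mat m q = mat_permute A p (inv q)"
proof (rule eq_matI)
  fix i j assume "i < dim_row (mat_permute A p (inv q))" "j < dim_col (mat_permute A p (inv q))"
  then have "i < n" "j < m" using assms(3) by auto
  moreover from \<open>j < m\<close> have "inv q j < m"
    by (rule permutes_lessThan[OF permutes_inv[OF assms(2)]])
  moreover have "perm_mat n p * A \<in> carrier_mat n m"
    using assms(3) by (intro mult_carrier_mat) (auto simp: perm_mat_def)
  ultimately show "(perm_mat n p * A * perm_mat m q) $$ (i,j) = mat_permute A p (inv q) $$ (i,j)"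
    using assms by (simp add: mult_perm_mat_index perm_mat_mult_index)
qed (use assms(3) in \<open>simp_all add: perm_mat_def\<close>)

lemma mat_isomorphic_iff_mat_permute:
  "mat_isomorphic A B \<longleftrightarrow>
     (\<exists>p q. p permutes {..<dim_row A} \<and> q permutes {..<dim_col A} \<and> B = mat_permute A p q)"
proof
  assume "mat_isomorphic A B"
  then obtain p q where "p permutes {..<dim_row A}" "q permutes {..<dim_col A}"
    and "B = perm_mat (dim_row A) p * A * perm_mat (dim_col A) q"
    by (auto simp: mat_isomorphic_def is_perm_mat_def)
  then show "\<exists>p q. p permutes {..<dim_row A} \<and> q permutes {..<dim_col A} \<and> B = mat_permute A p q"
    by (metis carrier_matI perm_mat_mult_perm_mat permutes_inv)
next
  assume "\<exists>p q. p permutes {..<dim_row A} \<and> q permutes {..<dim_col A} \<and> B = mat_permute A p q"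
  then obtain p q where "p permutes {..<dim_row A}" "q permutes {..<dim_col A}"
    and "B = mat_permute A p q" by blast
  then have "B = perm_mat (dim_row A) p * A * perm_mat (dim_col A) (inv q)"
    by (simp add: perm_mat_mult_perm_mat permutes_inv permutes_inv_inv)
  then show "mat_isomorphic A B"
    using \<open>p permutes _\<close> \<open>q permutes _\<close>
    unfolding mat_isomorphic_def is_perm_mat_def by (blast intro: permutes_inv)
qed

lemma mat_isomorphic_perm_mat_mult:
  "is_perm_mat (dim_row A) P \<Longrightarrow> is_perm_mat (dim_col A) Q \<Longrightarrow> mat_isomorphic A (P * A * Q)"
  unfolding mat_isomorphic_def by blast

lemma mat_permute_mat_permute:
  assumes "p' permutes {..<dim_row A}" "q' permutes {..<dim_col A}"
  shows "mat_permute (mat_permute A p q) p' q' = mat_permute A (p \<circ> p') (q \<circ> q')"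
    (is "?L = ?R")
proof (rule eq_matI)
  fix i j assume "i < dim_row ?R" "j < dim_col ?R"
  then show "?L $$ (i, j) = ?R $$ (i, j)"
    using permutes_lessThan[OF assms(1)] permutes_lessThan[OF assms(2)] by simp
qed simp_all

lemma mat_permute_id: "mat_permute A id id = A"
  by (intro eq_matI) auto

lemma mat_isomorphic_mat_permute:
  "p permutes {..<dim_row A} \<Longrightarrow> q permutes {..<dim_col A} \<Longrightarrow> mat_isomorphic A (mat_permute A p q)"
  unfolding mat_isomorphic_iff_mat_permute by blast

lemma mat_isomorphic_trans:
  assumes "mat_isomorphic A B" "mat_isomorphic B C"
  shows "mat_isomorphic A C"
proof -
  obtain p q where p: "p permutes {..<dim_row A}" and q: "q permutes {..<dim_col A}"
    and B: "B = mat_permute A p q"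
    using assms(1) unfolding mat_isomorphic_iff_mat_permute by blast
  obtain p' q' where "p' permutes {..<dim_row A}" "q' permutes {..<dim_col A}"
    and "C = mat_permute A (p \<circ> p') (q \<circ> q')"
    using assms(2) unfolding mat_isomorphic_iff_mat_permute B by (auto simp: mat_permute_mat_permute)
  with p q show ?thesis
    by (auto simp: mat_isomorphic_iff_mat_permute intro: permutes_compose)
qed

lemma mat_isomorphic_sym:
  assumes "mat_isomorphic A B"
  shows "mat_isomorphic B A"
proof -
  obtain p q where p: "p permutes {..<dim_row A}" and q: "q permutes {..<dim_col A}"
    and B: "B = mat_permute A p q"
    using assms unfolding mat_isomorphic_iff_mat_permute by blast
  have "mat_permute B (inv p) (inv q) = A"
    using B p q by (simp add: mat_permute_mat_permute permutes_inv permutes_inv_o mat_permute_id)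
  then show ?thesis
    using B p q by (metis dim_mat_permute mat_isomorphic_mat_permute permutes_inv)
qed

lemma transpose_mat_permute:
  assumes "p permutes {..<dim_row A}" "q permutes {..<dim_col A}"
  shows "(mat_permute A p q)\<^sup>T = mat_permute A\<^sup>T q p"
proof (rule eq_matI)
  fix i j assume "i < dim_row (mat_permute A\<^sup>T q p)" "j < dim_col (mat_permute A\<^sup>T q p)"
  then show "(mat_permute A p q)\<^sup>T $$ (i, j) = mat_permute A\<^sup>T q p $$ (i, j)"
    using permutes_lessThan[OF assms(1)] permutes_lessThan[OF assms(2)] by simp
qed simp_all

lemma mat_isomorphic_transpose:
  "mat_isomorphic A B \<Longrightarrow> mat_isomorphic A\<^sup>T B\<^sup>T"
  unfolding mat_isomorphic_iff_mat_permute index_transpose_mat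
  by (metis transpose_mat_permute)

lemma transpose_mult_mult:
  fixes A B C :: "'a :: comm_semiring_0 mat"
  assumes "A \<in> carrier_mat n k" "B \<in> carrier_mat k l" "C \<in> carrier_mat l m"
  shows "(A * B * C)\<^sup>T = C\<^sup>T * B\<^sup>T * A\<^sup>T"
proof -
  have "(A * B * C)\<^sup>T = C\<^sup>T * (B\<^sup>T * A\<^sup>T)"
    by (simp only: transpose_mult[OF mult_carrier_mat[OF assms(1,2)] assms(3)]
        transpose_mult[OF assms(1,2)])
  also have "\<dots> = C\<^sup>T * B\<^sup>T * A\<^sup>T"
    using assms by (simp add: assoc_mult_mat[of "C\<^sup>T" m l "B\<^sup>T" k "A\<^sup>T" n])
  finally show ?thesis .
qed

lemma transpose_perm_mat:
  "p permutes {..<n} \<Longrightarrow> (perm_mat n p)\<^sup>T = perm_mat n (inv p)"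
  by (intro eq_matI) (auto simp: perm_mat_def permutes_inv_eq)

lemma is_perm_mat_transpose: "is_perm_mat n P \<Longrightarrow> is_perm_mat n P\<^sup>T"
  unfolding is_perm_mat_def by (auto simp: transpose_perm_mat intro: permutes_inv)

lemma block3_cases:
  fixes i k r :: nat
  assumes "i < 2*k + r"
  obtains "i < k" | i' where "i = k + i'" "i' < k" | i' where "i = 2*k + i'" "i' < r"
proof -
  consider "i < k" | "k \<le> i" "i < 2*k" | "2*k \<le> i" by linarith
  then show thesis
  proof cases
    case 2
    then show thesis using that(2)[of "i - k"] by simp
  next
    case 3
    then show thesis using that(3)[of "i - 2*k"] assms by simp
  qed (use that(1) in blast)
qed

lemma dim_block_mat3 [simp]:
  "dim_row (block_mat3 a k1 k2 X1 X2 X3 X4 Y) = 2*k1 + dim_row Y"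
  "dim_col (block_mat3 a k1 k2 X1 X2 X3 X4 Y) = 2*k2 + dim_col Y"
  by (simp_all add: block_mat3_def)

lemma index_block_mat3 [simp]:
  fixes a k1 k2 X1 X2 X3 X4 Y
  defines "M \<equiv> block_mat3 a k1 k2 X1 X2 X3 X4 Y"
  shows
    "i < k1 \<Longrightarrow> j < k2 \<Longrightarrow> M $$ (i, j) = (if a then 0 else 1)"
    "i < k1 \<Longrightarrow> j < k2 \<Longrightarrow> M $$ (i, k2 + j) = (if a then 1 else 0)"
    "i < k1 \<Longrightarrow> j < dim_col Y \<Longrightarrow> M $$ (i, 2*k2 + j) = X1 $$ (i, j)"
    "i < k1 \<Longrightarrow> j < k2 \<Longrightarrow> M $$ (k1 + i, j) = (if a then 1 else 0)"
    "i < k1 \<Longrightarrow> j < k2 \<Longrightarrow> M $$ (k1 + i, k2 + j) = (if a then 0 else 1)"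
    "i < k1 \<Longrightarrow> j < dim_col Y \<Longrightarrow> M $$ (k1 + i, 2*k2 + j) = X2 $$ (i, j)"
    "i < dim_row Y \<Longrightarrow> j < k2 \<Longrightarrow> M $$ (2*k1 + i, j) = X3 $$ (i, j)"
    "i < dim_row Y \<Longrightarrow> j < k2 \<Longrightarrow> M $$ (2*k1 + i, k2 + j) = X4 $$ (i, j)"
    "i < dim_row Y \<Longrightarrow> j < dim_col Y \<Longrightarrow> M $$ (2*k1 + i, 2*k2 + j) = Y $$ (i, j)"
  unfolding M_def by (simp_all add: block_mat3_def)

definition block_swap :: "nat \<Rightarrow> nat \<Rightarrow> nat" where
  "block_swap k i = (if i < k then k + i else if i < 2*k then i - k else i)"

definition block_diag3 ::
    "nat \<Rightarrow> (nat \<Rightarrow> nat) \<Rightarrow> (nat \<Rightarrow> nat) \<Rightarrow> (nat \<Rightarrow> nat) \<Rightarrow> nat \<Rightarrow> nat" where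
  "block_diag3 k f g h i =
     (if i < k then f i else if i < 2*k then k + g (i - k) else 2*k + h (i - 2*k))"

lemma block_swap_simps [simp]:
  "i < k \<Longrightarrow> block_swap k i = k + i"
  "i < k \<Longrightarrow> block_swap k (k + i) = i"
  "block_swap k (2*k + i) = 2*k + i"
  by (simp_all add: block_swap_def)

lemma block_diag3_simps [simp]:
  "i < k \<Longrightarrow> block_diag3 k f g h i = f i"
  "i < k \<Longrightarrow> block_diag3 k f g h (k + i) = k + g i"
  "block_diag3 k f g h (2*k + i) = 2*k + h i"
  by (simp_all add: block_diag3_def)

lemma block_swap_block_swap [simp]: "block_swap k (block_swap k i) = i"
  by (auto simp: block_swap_def)

lemma permutes_block_swap: "block_swap k permutes {..<2*k + c}"
proof (rule inj_imp_permutes)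
  show "inj_on (block_swap k) {..<2*k + c}"
    by (rule inj_on_inverseI[where g = "block_swap k"]) simp
qed (auto simp: block_swap_def)

lemma permutes_block_diag3:
  assumes f: "f permutes {..<k}" and g: "g permutes {..<k}" and h: "h permutes {..<c}"
  shows "block_diag3 k f g h permutes {..<2*k + c}"
proof (rule inj_imp_permutes)
  have "block_diag3 k (inv f) (inv g) (inv h) (block_diag3 k f g h i) = i" for i
    using permutes_in_image[OF f, of i] permutes_in_image[OF g, of "i - k"]
    by (auto simp: block_diag3_def permutes_inverses[OF f] permutes_inverses[OF g]
        permutes_inverses[OF h])
  then show "inj_on (block_diag3 k f g h) {..<2*k + c}"
    by (rule inj_on_inverseI)
  show "block_diag3 k f g h i \<in> {..<2*k + c}" if "i \<in> {..<2*k + c}" for i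
  proof -
    from that have "i < 2*k + c" by simp
    then show ?thesis
    proof (cases rule: block3_cases)
      case 1
      then show ?thesis using permutes_lessThan[OF f, of i] by simp
    next
      case (2 i')
      then show ?thesis using permutes_lessThan[OF g, of i'] by simp
    next
      case (3 i')
      then show ?thesis using permutes_lessThan[OF h, of i'] by simp
    qed
  qed
  show "block_diag3 k f g h i = i" if "i \<notin> {..<2*k + c}" for i
    using that permutes_not_in[OF h, of "i - 2*k"] by (auto simp: block_diag3_def)
qed simp

lemma block_mat3_swap_rows:
  "mat_permute (block_mat3 a k1 k2 X1 X2 X3 X4 Y) (block_swap k1) id =
     block_mat3 (\<not> a) k1 k2 X2 X1 X3 X4 Y"
proof (rule eq_matI)
  fix i j assume "i < dim_row (block_mat3 (\<not> a) k1 k2 X2 X1 X3 X4 Y)"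
    "j < dim_col (block_mat3 (\<not> a) k1 k2 X2 X1 X3 X4 Y)"
  then have i: "i < 2*k1 + dim_row Y" and j: "j < 2*k2 + dim_col Y" by simp_all
  show "mat_permute (block_mat3 a k1 k2 X1 X2 X3 X4 Y) (block_swap k1) id $$ (i, j) =
      block_mat3 (\<not> a) k1 k2 X2 X1 X3 X4 Y $$ (i, j)"
    by (rule block3_cases[OF i]; rule block3_cases[OF j]; simp)
qed simp_all

lemma mat_permute_block_mat3:
  assumes "X1 \<in> carrier_mat k1 (dim_col Y)" "X2 \<in> carrier_mat k1 (dim_col Y)"
    and "X3 \<in> carrier_mat (dim_row Y) k2" "X4 \<in> carrier_mat (dim_row Y) k2"
    and f: "f permutes {..<k1}" and g: "g permutes {..<k1}" and h: "h permutes {..<dim_row Y}"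
    and f': "f' permutes {..<k2}" and g': "g' permutes {..<k2}" and h': "h' permutes {..<dim_col Y}"
  shows "mat_permute (block_mat3 a k1 k2 X1 X2 X3 X4 Y)
      (block_diag3 k1 f g h) (block_diag3 k2 f' g' h') =
    block_mat3 a k1 k2 (mat_permute X1 f h') (mat_permute X2 g h') (mat_permute X3 h f')
      (mat_permute X4 h g') (mat_permute Y h h')"
    (is "mat_permute ?A ?r ?c = ?B")
proof (rule eq_matI)
  fix i j assume "i < dim_row ?B" and "j < dim_col ?B"
  then have i: "i < 2*k1 + dim_row Y" and j: "j < 2*k2 + dim_col Y" by simp_all
  note bounds = assms(1-4)[THEN carrier_matD(1)] assms(1-4)[THEN carrier_matD(2)]
    permutes_lessThan[OF f] permutes_lessThan[OF g] permutes_lessThan[OF h]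
    permutes_lessThan[OF f'] permutes_lessThan[OF g'] permutes_lessThan[OF h']
  show "mat_permute ?A ?r ?c $$ (i, j) = ?B $$ (i, j)"
    by (rule block3_cases[OF i]; rule block3_cases[OF j]; simp add: bounds)
qed simp_all

lemma transpose_block_mat3:
  assumes "X1 \<in> carrier_mat k1 (dim_col Y)" "X2 \<in> carrier_mat k1 (dim_col Y)"
    and "X3 \<in> carrier_mat (dim_row Y) k2" "X4 \<in> carrier_mat (dim_row Y) k2"
  shows "(block_mat3 a k1 k2 X1 X2 X3 X4 Y)\<^sup>T = block_mat3 a k2 k1 X3\<^sup>T X4\<^sup>T X1\<^sup>T X2\<^sup>T Y\<^sup>T"
proof (rule eq_matI)
  fix i j assume "i < dim_row (block_mat3 a k2 k1 X3\<^sup>T X4\<^sup>T X1\<^sup>T X2\<^sup>T Y\<^sup>T)"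
    "j < dim_col (block_mat3 a k2 k1 X3\<^sup>T X4\<^sup>T X1\<^sup>T X2\<^sup>T Y\<^sup>T)"
  then have i: "i < 2*k2 + dim_col Y" and j: "j < 2*k1 + dim_row Y" by simp_all
  show "(block_mat3 a k1 k2 X1 X2 X3 X4 Y)\<^sup>T $$ (i, j) =
      block_mat3 a k2 k1 X3\<^sup>T X4\<^sup>T X1\<^sup>T X2\<^sup>T Y\<^sup>T $$ (i, j)"
    by (rule block3_cases[OF i]; rule block3_cases[OF j];
        simp add: assms[THEN carrier_matD(1)] assms[THEN carrier_matD(2)])
qed simp_all

lemma R_setE:
  assumes "(P1, P2, Q) \<in> R_set X1 X2" and "q permutes {..<n}" "Q = perm_mat n q"
    and X1: "X1 \<in> carrier_mat k n" and X2: "X2 \<in> carrier_mat k n"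
  obtains p1 p2 where "p1 permutes {..<k}" "p2 permutes {..<k}"
    "mat_permute X1 p1 (inv q) = X2" "mat_permute X2 p2 (inv q) = X1"
proof -
  have "is_perm_mat k P1" "is_perm_mat k P2" and X12: "X2 = P1 * X1 * Q" "X1 = P2 * X2 * Q"
    using assms(1) unfolding R_set_def mem_Collect_eq prod.case carrier_matD(1)[OF X1] by blast+
  then obtain p1 p2 where p1: "p1 permutes {..<k}" "P1 = perm_mat k p1"
    and p2: "p2 permutes {..<k}" "P2 = perm_mat k p2"
    unfolding is_perm_mat_def by blast
  show thesis
  proof (rule that[OF p1(1) p2(1)])
    show "mat_permute X1 p1 (inv q) = X2"
      using X12(1) by (simp only: p1(2) assms(3) perm_mat_mult_perm_mat[OF p1(1) assms(2) X1])
    show "mat_permute X2 p2 (inv q) = X1"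
      using X12(2) by (simp only: p2(2) assms(3) perm_mat_mult_perm_mat[OF p2(1) assms(2) X2])
  qed
qed

lemma L_setE:
  assumes "(P, Q3, Q4) \<in> L_set X3 X4" and "p permutes {..<n}" "P = perm_mat n p"
    and X3: "X3 \<in> carrier_mat n k" and X4: "X4 \<in> carrier_mat n k"
  obtains q3 q4 where "q3 permutes {..<k}" "q4 permutes {..<k}"
    "mat_permute X3 p (inv q3) = X3" "mat_permute X4 p (inv q4) = X4"
proof -
  have "is_perm_mat k Q3" "is_perm_mat k Q4" and X34: "X3 = P * X3 * Q3" "X4 = P * X4 * Q4"
    using assms(1) unfolding L_set_def mem_Collect_eq prod.case carrier_matD(2)[OF X3] by blast+
  then obtain q3 q4 where q3: "q3 permutes {..<k}" "Q3 = perm_mat k q3"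
    and q4: "q4 permutes {..<k}" "Q4 = perm_mat k q4"
    unfolding is_perm_mat_def by blast
  show thesis
  proof (rule that[OF q3(1) q4(1)])
    show "mat_permute X3 p (inv q3) = X3"
      using X34(1) by (simp only: q3(2) assms(3) perm_mat_mult_perm_mat[OF assms(2) q3(1) X3])
    show "mat_permute X4 p (inv q4) = X4"
      using X34(2) by (simp only: q4(2) assms(3) perm_mat_mult_perm_mat[OF assms(2) q4(1) X4])
  qed
qed

lemma mat_isomorphic_block_mat3_of_R_set_L_set:
  assumes X1: "X1 \<in> carrier_mat k1 (dim_col Y)" and X2: "X2 \<in> carrier_mat k1 (dim_col Y)"
    and X3: "X3 \<in> carrier_mat (dim_row Y) k2" and X4: "X4 \<in> carrier_mat (dim_row Y) k2"
    and "is_perm_mat (dim_row Y) P" "is_perm_mat (dim_col Y) Q" "Y = P * Y * Q"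
    and "(P1, P2, Q) \<in> R_set X1 X2" "(P, Q3, Q4) \<in> L_set X3 X4"
  shows "mat_isomorphic (block_mat3 True k1 k2 X1 X2 X3 X4 Y) (block_mat3 False k1 k2 X1 X2 X3 X4 Y)"
proof -
  obtain p where p: "p permutes {..<dim_row Y}" and P: "P = perm_mat (dim_row Y) p"
    using assms(5) unfolding is_perm_mat_def by blast
  obtain q where q: "q permutes {..<dim_col Y}" and Q: "Q = perm_mat (dim_col Y) q"
    using assms(6) unfolding is_perm_mat_def by blast
  obtain p1 p2 where p12: "p1 permutes {..<k1}" "p2 permutes {..<k1}"
    and X12: "mat_permute X1 p1 (inv q) = X2" "mat_permute X2 p2 (inv q) = X1"
    using R_setE[OF assms(8) q Q X1 X2] .
  obtain q3 q4 where q34: "q3 permutes {..<k2}" "q4 permutes {..<k2}"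
    and X34: "mat_permute X3 p (inv q3) = X3" "mat_permute X4 p (inv q4) = X4"
    using L_setE[OF assms(9) p P X3 X4] .
  have Y: "mat_permute Y p (inv q) = Y"
    using assms(7) p q by (simp only: P Q perm_mat_mult_perm_mat[OF p q carrier_mat_triv])
  have swap: "block_mat3 False k1 k2 X2 X1 X3 X4 Y =
      mat_permute (block_mat3 True k1 k2 X1 X2 X3 X4 Y) (block_swap k1) id"
    by (simp add: block_mat3_swap_rows)
  have diag: "block_mat3 False k1 k2 X1 X2 X3 X4 Y =
      mat_permute (block_mat3 False k1 k2 X2 X1 X3 X4 Y)
        (block_diag3 k1 p2 p1 p) (block_diag3 k2 (inv q3) (inv q4) (inv q))"
    using X1 X2 X3 X4 p q p12 q34
    by (subst mat_permute_block_mat3) (simp_all add: X12 X34 Y permutes_inv)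
  have "mat_isomorphic (block_mat3 True k1 k2 X1 X2 X3 X4 Y) (block_mat3 False k1 k2 X2 X1 X3 X4 Y)"
    unfolding swap by (rule mat_isomorphic_mat_permute) (simp_all add: permutes_block_swap)
  moreover have
    "mat_isomorphic (block_mat3 False k1 k2 X2 X1 X3 X4 Y) (block_mat3 False k1 k2 X1 X2 X3 X4 Y)"
    unfolding diag using p q p12 q34
    by (intro mat_isomorphic_mat_permute) (simp_all add: permutes_block_diag3 permutes_inv)
  ultimately show ?thesis
    by (rule mat_isomorphic_trans)
qed

lemma mat_isomorphic_block_mat3_of_fixable:
  assumes X1: "X1 \<in> carrier_mat k1 (dim_col Y)" and X2: "X2 \<in> carrier_mat k1 (dim_col Y)"
    and X3: "X3 \<in> carrier_mat (dim_row Y) k2" and X4: "X4 \<in> carrier_mat (dim_row Y) k2"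
    and "fixable X1 X2 X3 X4 Y"
  shows "mat_isomorphic (block_mat3 True k1 k2 X1 X2 X3 X4 Y) (block_mat3 False k1 k2 X1 X2 X3 X4 Y)"
proof -
  obtain P Q where P: "is_perm_mat (dim_row Y) P" and Q: "is_perm_mat (dim_col Y) Q"
    and Y: "Y = P * Y * Q"
    and cases: "(\<exists>P1 P2 Q3 Q4. (P1, P2, Q) \<in> R_set X1 X2 \<and> (P, Q3, Q4) \<in> L_set X3 X4) \<or>
      (\<exists>P1 P2 Q3 Q4. (Q3, Q4, P\<^sup>T) \<in> R_set X3\<^sup>T X4\<^sup>T \<and> (Q\<^sup>T, P1, P2) \<in> L_set X1\<^sup>T X2\<^sup>T)"
    using assms(5) unfolding fixable_def by blast
  from cases show ?thesis
  proof (elim disjE exE conjE)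
    fix P1 P2 Q3 Q4 assume "(P1, P2, Q) \<in> R_set X1 X2" "(P, Q3, Q4) \<in> L_set X3 X4"
    then show ?thesis
      using mat_isomorphic_block_mat3_of_R_set_L_set[OF X1 X2 X3 X4 P Q Y] by blast
  next
    fix P1 P2 Q3 Q4
    assume R: "(Q3, Q4, P\<^sup>T) \<in> R_set X3\<^sup>T X4\<^sup>T" and L: "(Q\<^sup>T, P1, P2) \<in> L_set X1\<^sup>T X2\<^sup>T"
    have P_carrier: "P \<in> carrier_mat (dim_row Y) (dim_row Y)"
      and Q_carrier: "Q \<in> carrier_mat (dim_col Y) (dim_col Y)"
      using P Q by (auto simp: is_perm_mat_def perm_mat_def)
    have "Y\<^sup>T = Q\<^sup>T * Y\<^sup>T * P\<^sup>T"
      using transpose_mult_mult[OF P_carrier carrier_mat_triv Q_carrier] by (simp only: Y[symmetric])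
    then have "mat_isomorphic (block_mat3 True k2 k1 X3\<^sup>T X4\<^sup>T X1\<^sup>T X2\<^sup>T Y\<^sup>T)
        (block_mat3 False k2 k1 X3\<^sup>T X4\<^sup>T X1\<^sup>T X2\<^sup>T Y\<^sup>T)"
      using X1 X2 X3 X4 P Q R L
      by (intro mat_isomorphic_block_mat3_of_R_set_L_set) (auto intro: is_perm_mat_transpose)
    then have "mat_isomorphic (block_mat3 True k1 k2 X1 X2 X3 X4 Y)\<^sup>T
        (block_mat3 False k1 k2 X1 X2 X3 X4 Y)\<^sup>T"
      by (simp only: transpose_block_mat3[OF X1 X2 X3 X4])
    from mat_isomorphic_transpose[OF this] show ?thesis
      by (simp only: transpose_transpose)
  qed
qed

(* The Gram-mate, rank and line-sum hypotheses are what produce the block form in the paper. *)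
theorem proposition6p1:
  fixes A B :: "real mat"
  assumes "gram_mates A B"
    and "mat_rank (A - B) = 1"
    and "is_perm_mat (dim_row A) P0" and "is_perm_mat (dim_col A) Q0"
    and "k1 > 0" and "k2 > 0"
    and "X1 \<in> carrier_mat k1 (dim_col Y)" and "X2 \<in> carrier_mat k1 (dim_col Y)"
    and "X3 \<in> carrier_mat (dim_row Y) k2" and "X4 \<in> carrier_mat (dim_row Y) k2"
    and "P0 * A * Q0 = block_mat3 True k1 k2 X1 X2 X3 X4 Y"
    and "P0 * B * Q0 = block_mat3 False k1 k2 X1 X2 X3 X4 Y"
    and "X1\<^sup>T *\<^sub>v vec k1 (\<lambda>_. 1) = X2\<^sup>T *\<^sub>v vec k1 (\<lambda>_. 1)"
    and "X3 *\<^sub>v vec k2 (\<lambda>_. 1) = X4 *\<^sub>v vec k2 (\<lambda>_. 1)"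
    and "fixable X1 X2 X3 X4 Y"
  shows "mat_isomorphic A B"
proof -
  have "dim_row B = dim_row A" "dim_col B = dim_col A"
    using assms(1) by (simp_all add: gram_mates_def)
  then have "mat_isomorphic B (block_mat3 False k1 k2 X1 X2 X3 X4 Y)"
    using mat_isomorphic_perm_mat_mult[of B P0 Q0] assms(3,4,12) by simp
  moreover have "mat_isomorphic A (block_mat3 True k1 k2 X1 X2 X3 X4 Y)"
    using mat_isomorphic_perm_mat_mult[OF assms(3,4)] assms(11) by simp
  moreover have
    "mat_isomorphic (block_mat3 True k1 k2 X1 X2 X3 X4 Y) (block_mat3 False k1 k2 X1 X2 X3 X4 Y)"
    using assms(7-10,15) by (rule mat_isomorphic_block_mat3_of_fixable)
  ultimately show ?thesis
    by (blast intro: mat_isomorphic_trans mat_isomorphic_sym)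
qed

end
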